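(* Let $\phi:[\tau,\tau+1]\to\mathbb R$ be right-continuous with finitely many discontinuities, continuously differentiable between them, with $\phi(\tau)\ge0$, and let $\phi^+=\sup_{t\in[\tau,\tau+1]}\phi(t)$. Let $0<\nu\le1$, $\gamma\ge0$, $M\ge0$, and $\mu,a_1,a_2,a_3\ge0$ with $\mu a_1<1$. Suppose that at every point of differentiability $\frac{d\phi}{dt}\le-\nu\phi+\gamma$, and that the sum over all discontinuity points $t$ of the positive parts $\max\{0,\phi(t)-\phi(t^-)\}$ is at most $\mu(a_1\phi^++a_2\phi(\tau)+a_3M)$. If \[ \mu\Big[\frac{a_1(1+\mu a_2)}{1-\mu a_1}+a_2\Big]\le\frac\nu8\quad\text{and}\quad\phi(\tau)\ge\frac{8\mu}{\nu}\,a_3M\,\frac1{1-\mu a_1}, \] then $\phi(\tau+1)\le\big(1-\frac\nu4\big)\phi(\tau)+\frac{\gamma}{1-\mu a_1}$. *)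

theory Defs
  imports "HOL-Analysis.Analysis"
begin

definition left_lim :: "(real \<Rightarrow> real) \<Rightarrow> real \<Rightarrow> real" where
  "left_lim f t = Lim (at_left t) f"

end

theory Submission
  imports Defs
begin

(* Put E(t) = exp (nu (t - tau)).  Between the jumps of phi the
   differential inequality phi' <= -nu phi + gamma makes the integrating-factor
   transform E (phi - gamma/nu) nonincreasing, and at a jump it increases by at
   most E times the positive part of the jump.  Summing over the finitely many
   jumps gives a piecewise Groenwall estimate: phi(t) is at most the comparison
   solution plus the total positive jump mass J.  Taking t = tau + 1, and
   bounding the supremum of phi by phi(tau) + gamma + J, the hypothesis on the
   jumps becomes a linear inequality for J which, by the smallness conditions,
   gives gamma + J <= nu/4 phi(tau) + gamma/(1 - mu a1); with exp(-nu) <= 1 - nu/2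
   this is the claim. *)

lemma nonincreasing_right_continuous_start:
  fixes f :: "real \<Rightarrow> real" and d b :: real
  assumes "d \<le> b"
    and start: "d < b \<Longrightarrow> continuous (at_right d) f"
    and cont: "\<forall>t\<in>{d<..b}. continuous (at t within {d..b}) f"
    and der: "\<forall>t\<in>{d<..<b}. \<exists>y. (f has_real_derivative y) (at t) \<and> y \<le> 0"
  shows "f b \<le> f d"
proof (cases "d = b")
  case False
  with \<open>d \<le> b\<close> have "d < b" by simp
  have "continuous (at t within {d..b}) f" if "t \<in> {d..b}" for t
  proof (cases "t = d")
    case True
    then show ?thesis using start \<open>d < b\<close>
      by (simp add: continuous_within at_within_Icc_at_right)
  qed (use cont that in auto)
  then have "continuous_on {d..b} f" by (simp add: continuous_on_eq_continuous_within)
  then show ?thesis using DERIV_nonpos_imp_decreasing_open[OF \<open>d \<le> b\<close>] der by auto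
qed simp

lemma nonincreasing_up_to_jumps:
  fixes f c :: "real \<Rightarrow> real" and D :: "real set" and a b :: real
  assumes "finite D" and "a \<le> b" and "D \<subseteq> {a<..b}"
    and "\<forall>t\<in>D. t < b \<longrightarrow> continuous (at_right t) f"
    and "\<forall>t\<in>{a..b} - D. continuous (at t within {a..b}) f"
    and "\<forall>t\<in>{a<..<b} - D. \<exists>y. (f has_real_derivative y) (at t) \<and> y \<le> 0"
    and "\<forall>t\<in>D. \<exists>L. (f \<longlongrightarrow> L) (at_left t) \<and> f t \<le> L + c t"
  shows "f b \<le> f a + sum c D"
  using assms
proof (induction D arbitrary: b rule: finite_linorder_max_induct)
  case empty
  have "continuous_on {a..b} f"
    using empty.prems(4) by (simp add: continuous_on_eq_continuous_within)
  then show ?case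
    using DERIV_nonpos_imp_decreasing_open[OF \<open>a \<le> b\<close>] empty.prems(5) by auto
next
  case (insert d A)
  have d: "a < d" "d \<le> b" and d_notin: "d \<notin> A"
    using insert.prems(2) insert.hyps(2) by auto
  text \<open>No jumps occur on (d,b], so f is nonincreasing there.\<close>
  have fb: "f b \<le> f d"
  proof (rule nonincreasing_right_continuous_start[where f = f and d = d and b = b])
    show "d \<le> b" "d < b \<Longrightarrow> continuous (at_right d) f" using d insert.prems(3) by auto
    show "\<forall>t\<in>{d<..<b}. \<exists>y. (f has_real_derivative y) (at t) \<and> y \<le> 0"
      using insert.prems(5) insert.hyps(2) d by fastforce
    show "\<forall>t\<in>{d<..b}. continuous (at t within {d..b}) f"
    proof
      fix t assume "t \<in> {d<..b}"
      then have "t \<in> {a..b} - insert d A" using d insert.hyps(2) by auto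
      then have "continuous (at t within {a..b}) f" using insert.prems(4) by blast
      then show "continuous (at t within {d..b}) f"
        by (rule continuous_within_subset) (use d in auto)
    qed
  qed
  obtain L where L: "(f \<longlongrightarrow> L) (at_left d)" "f d \<le> L + c d"
    using insert.prems(6) by auto
  text \<open>Just left of d every earlier jump has been passed: apply the induction
    hypothesis on [a,s] and let s tend to d.\<close>
  have "\<forall>\<^sub>F s in at_left d. \<forall>x\<in>A. x < s"
  proof (rule eventually_ball_finite[OF insert.hyps(1)], rule ballI)
    fix x assume "x \<in> A"
    then show "\<forall>\<^sub>F s in at_left d. x < s"
      using eventually_at_left_real[of x d] insert.hyps(2) by (auto elim: eventually_mono)
  qed
  with eventually_at_left_real[OF d(1)]
  have "\<forall>\<^sub>F s in at_left d. s \<in> {a<..<d} \<and> (\<forall>x\<in>A. x < s)"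
    by (rule eventually_conj)
  then have "\<forall>\<^sub>F s in at_left d. f s \<le> f a + sum c A"
  proof eventually_elim
    case (elim s)
    show ?case
    proof (rule insert.IH)
      show "a \<le> s" "A \<subseteq> {a<..s}" using elim insert.prems(2) by force+
      show "\<forall>t\<in>A. t < s \<longrightarrow> continuous (at_right t) f"
        using insert.prems(3) insert.hyps(2) d by force
      show "\<forall>t\<in>{a..s} - A. continuous (at t within {a..s}) f"
        using insert.prems(4) elim d by (force intro: continuous_within_subset)
      show "\<forall>t\<in>{a<..<s} - A. \<exists>y. (f has_real_derivative y) (at t) \<and> y \<le> 0"
        using insert.prems(5) elim d by force
      show "\<forall>t\<in>A. \<exists>L. (f \<longlongrightarrow> L) (at_left t) \<and> f t \<le> L + c t"
        using insert.prems(6) by auto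
    qed
  qed
  then have "L \<le> f a + sum c A"
    using tendsto_upperbound[OF L(1)] trivial_limit_at_left_real by blast
  then show ?case using fb L(2) d_notin insert.hyps(1) by simp
qed

text \<open>The integrating-factor transform of phi for the comparison equation
  phi' = -nu phi + gamma, whose equilibrium is gamma/nu.\<close>
definition weighted_excess :: "real \<Rightarrow> real \<Rightarrow> real \<Rightarrow> (real \<Rightarrow> real) \<Rightarrow> real \<Rightarrow> real" where
  "weighted_excess \<nu> \<gamma> a \<phi> s = exp (\<nu> * (s - a)) * (\<phi> s - \<gamma> / \<nu>)"

text \<open>Where phi' <= -nu phi + gamma, the weighted excess has derivative
  exp(nu (s - a)) (phi' + nu phi - gamma) <= 0.\<close>
lemma weighted_excess_deriv_nonpos:
  fixes \<phi> :: "real \<Rightarrow> real" and \<nu> \<gamma> a s y :: real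
  assumes nu: "\<nu> > 0" and deriv: "(\<phi> has_real_derivative y) (at s)"
    and ode: "y \<le> - \<nu> * \<phi> s + \<gamma>"
  shows "\<exists>z. (weighted_excess \<nu> \<gamma> a \<phi> has_real_derivative z) (at s) \<and> z \<le> 0"
proof -
  define E where "E = exp (\<nu> * (s - a))"
  have "(weighted_excess \<nu> \<gamma> a \<phi> has_real_derivative
          E * (\<nu> * 1) * (\<phi> s - \<gamma> / \<nu>) + E * (y - 0)) (at s)"
    unfolding weighted_excess_def E_def by (auto intro!: derivative_eq_intros deriv)
  moreover have "E * (\<nu> * 1) * (\<phi> s - \<gamma> / \<nu>) + E * (y - 0) = E * (y + \<nu> * \<phi> s - \<gamma>)"
    using nu by (simp add: field_simps)
  moreover have "E * (y + \<nu> * \<phi> s - \<gamma>) \<le> 0"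
    using ode unfolding E_def by (simp add: mult_nonneg_nonpos)
  ultimately show ?thesis by metis
qed

lemma weighted_excess_jump:
  fixes \<phi> :: "real \<Rightarrow> real" and \<nu> \<gamma> a s t L :: real
  assumes nu: "\<nu> > 0" and "s \<le> t" and L: "(\<phi> \<longlongrightarrow> L) (at_left s)"
  shows "\<exists>L'. (weighted_excess \<nu> \<gamma> a \<phi> \<longlongrightarrow> L') (at_left s) \<and>
           weighted_excess \<nu> \<gamma> a \<phi> s \<le> L' + exp (\<nu> * (t - a)) * max 0 (\<phi> s - left_lim \<phi> s)"
proof -
  have lim: "left_lim \<phi> s = L"
    unfolding left_lim_def using tendsto_Lim[OF trivial_limit_at_left_real L] .
  have "(weighted_excess \<nu> \<gamma> a \<phi> \<longlongrightarrow> exp (\<nu> * (s - a)) * (L - \<gamma> / \<nu>)) (at_left s)"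
    unfolding weighted_excess_def by (intro tendsto_intros L)
  moreover have "weighted_excess \<nu> \<gamma> a \<phi> s
      \<le> exp (\<nu> * (s - a)) * (L - \<gamma> / \<nu>) + exp (\<nu> * (t - a)) * max 0 (\<phi> s - L)"
  proof -
    have "weighted_excess \<nu> \<gamma> a \<phi> s
        \<le> exp (\<nu> * (s - a)) * ((L - \<gamma> / \<nu>) + max 0 (\<phi> s - L))"
      unfolding weighted_excess_def by (intro mult_left_mono) auto
    also have "\<dots> \<le> exp (\<nu> * (s - a)) * (L - \<gamma> / \<nu>) + exp (\<nu> * (t - a)) * max 0 (\<phi> s - L)"
      using nu \<open>s \<le> t\<close> by (simp add: distrib_left mult_left_mono mult_right_mono)
    finally show ?thesis .
  qed
  ultimately show ?thesis unfolding lim by blast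
qed

lemma groenwall_with_jumps:
  fixes \<phi> :: "real \<Rightarrow> real" and D :: "real set" and a B \<nu> \<gamma> t :: real
  assumes D_fin: "finite D" and D_sub: "D \<subseteq> {a<..B}"
    and right_cont: "\<forall>s\<in>D. s < B \<longrightarrow> continuous (at_right s) \<phi>"
    and cont_off_D: "\<forall>s\<in>{a..B} - D. continuous (at s within {a..B}) \<phi>"
    and left_lims: "\<forall>s\<in>D. \<exists>L. (\<phi> \<longlongrightarrow> L) (at_left s)"
    and ode: "\<forall>s\<in>{a<..<B} - D. \<exists>y. (\<phi> has_real_derivative y) (at s) \<and> y \<le> - \<nu> * \<phi> s + \<gamma>"
    and nu: "\<nu> > 0" and t: "t \<in> {a..B}"
  shows "\<phi> t \<le> exp (- (\<nu> * (t - a))) * \<phi> a + \<gamma> / \<nu> * (1 - exp (- (\<nu> * (t - a))))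
           + (\<Sum>s\<in>D \<inter> {a<..t}. max 0 (\<phi> s - left_lim \<phi> s))"
proof -
  define h where "h = weighted_excess \<nu> \<gamma> a \<phi>"
  define E where "E = exp (\<nu> * (t - a))"
  define J where "J = (\<Sum>s\<in>D \<inter> {a<..t}. max 0 (\<phi> s - left_lim \<phi> s))"
  have "h t \<le> h a + (\<Sum>s\<in>D \<inter> {a<..t}. E * max 0 (\<phi> s - left_lim \<phi> s))"
  proof (rule nonincreasing_up_to_jumps[where f = h and a = a and b = t])
    show "finite (D \<inter> {a<..t})" using D_fin by simp
    show "a \<le> t" using t by simp
    show "D \<inter> {a<..t} \<subseteq> {a<..t}" by blast
    show "\<forall>s\<in>D \<inter> {a<..t}. s < t \<longrightarrow> continuous (at_right s) h"
      unfolding h_def weighted_excess_def using right_cont t by (auto intro!: continuous_intros)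
    show "\<forall>s\<in>{a..t} - D \<inter> {a<..t}. continuous (at s within {a..t}) h"
    proof
      fix s assume "s \<in> {a..t} - D \<inter> {a<..t}"
      then have "s \<in> {a..B} - D" using t D_sub by auto
      then have "continuous (at s within {a..B}) \<phi>" using cont_off_D by blast
      then have "continuous (at s within {a..t}) \<phi>"
        by (rule continuous_within_subset) (use t in auto)
      then show "continuous (at s within {a..t}) h"
        unfolding h_def weighted_excess_def by (intro continuous_intros)
    qed
    show "\<forall>s\<in>{a<..<t} - D \<inter> {a<..t}. \<exists>y. (h has_real_derivative y) (at s) \<and> y \<le> 0"
      using ode t weighted_excess_deriv_nonpos[OF nu] unfolding h_def by fastforce
    show "\<forall>s\<in>D \<inter> {a<..t}. \<exists>L. (h \<longlongrightarrow> L) (at_left s) \<and>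
            h s \<le> L + E * max 0 (\<phi> s - left_lim \<phi> s)"
      using left_lims weighted_excess_jump[OF nu] unfolding h_def E_def by fastforce
  qed
  then have step: "E * (\<phi> t - \<gamma> / \<nu>) \<le> (\<phi> a - \<gamma> / \<nu>) + E * J"
    unfolding h_def weighted_excess_def J_def E_def by (simp add: sum_distrib_left)
  define e where "e = exp (- (\<nu> * (t - a)))"
  have inv: "e * E = 1" unfolding e_def E_def by (simp add: exp_minus)
  have "\<phi> t - \<gamma> / \<nu> = e * (E * (\<phi> t - \<gamma> / \<nu>))"
    unfolding mult.assoc[symmetric] inv by simp
  also have "\<dots> \<le> e * ((\<phi> a - \<gamma> / \<nu>) + E * J)"
    using step unfolding e_def by (rule mult_left_mono) simp
  also have "\<dots> = e * (\<phi> a - \<gamma> / \<nu>) + J"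
    unfolding distrib_left mult.assoc[symmetric] inv by simp
  finally show ?thesis unfolding J_def e_def by (simp add: algebra_simps)
qed

lemma forcing_gain_le:
  fixes \<nu> \<gamma> s :: real
  assumes "\<nu> > 0" and "\<gamma> \<ge> 0" and "s \<ge> 0"
  shows "\<gamma> / \<nu> * (1 - exp (- (\<nu> * s))) \<le> \<gamma> * s"
proof -
  have "1 - exp (- (\<nu> * s)) \<le> \<nu> * s" using exp_ge_add_one_self[of "- (\<nu> * s)"] by simp
  then have "\<gamma> * (1 - exp (- (\<nu> * s))) \<le> \<gamma> * (\<nu> * s)"
    using assms(2) by (rule mult_left_mono)
  then show ?thesis using assms(1) by (simp add: field_simps)
qed

lemma exp_neg_le_one_minus_half:
  fixes x :: real
  assumes "0 \<le> x" and "x \<le> 1"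
  shows "exp (- x) \<le> 1 - x / 2"
proof -
  have taylor: "1 + x + x\<^sup>2 / 2 \<le> exp x" using exp_lower_Taylor_quadratic assms by simp
  have "x * x \<le> 1" using assms by (simp add: mult_le_one)
  then have "x * (x * x) \<le> x" using assms(1) by (rule mult_left_le)
  then have "x ^ 3 \<le> x" by (simp add: power3_eq_cube mult.assoc)
  moreover have "(1 - x / 2) * (1 + x + x\<^sup>2 / 2) = 1 + x / 2 - x ^ 3 / 4"
    by (simp add: field_simps power2_eq_square power3_eq_cube)
  ultimately have "1 \<le> (1 - x / 2) * (1 + x + x\<^sup>2 / 2)" using assms by linarith
  also have "\<dots> \<le> (1 - x / 2) * exp x" using taylor assms by (intro mult_left_mono) auto
  finally show ?thesis by (simp add: exp_minus field_simps)
qed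

lemma absorb_jump_mass:
  fixes p J S \<gamma> \<nu> \<mu> a1 a2 a3 M :: real
  assumes p: "p \<ge> 0" and nu: "\<nu> > 0" and mu: "\<mu> \<ge> 0" and a1: "a1 \<ge> 0"
    and mua1: "\<mu> * a1 < 1"
    and J_le: "J \<le> \<mu> * (a1 * S + a2 * p + a3 * M)"
    and S_le: "S \<le> p + \<gamma> + J"
    and small: "\<mu> * (a1 * (1 + \<mu> * a2) / (1 - \<mu> * a1) + a2) \<le> \<nu> / 8"
    and large: "p \<ge> (8 * \<mu> / \<nu>) * a3 * M * (1 / (1 - \<mu> * a1))"
  shows "\<gamma> + J \<le> \<nu> / 4 * p + \<gamma> / (1 - \<mu> * a1)"
proof -
  define k where "k = 1 - \<mu> * a1"
  have k: "k > 0" using mua1 unfolding k_def by simp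
  text \<open>The smallness condition says exactly mu (a1 + a2) <= k nu / 8.\<close>
  have "\<mu> * (a1 * (1 + \<mu> * a2) / k + a2) * k = \<mu> * (a1 + a2)"
    using k unfolding k_def by (simp add: field_simps)
  moreover have "\<mu> * (a1 * (1 + \<mu> * a2) / k + a2) * k \<le> \<nu> / 8 * k"
    using small k unfolding k_def by (intro mult_right_mono) auto
  ultimately have mu_a12: "\<mu> * (a1 + a2) * p \<le> k * \<nu> / 8 * p"
    using p by (intro mult_right_mono) (auto simp: algebra_simps)
  have "(8 * \<mu> / \<nu>) * a3 * M * (1 / k) * (k * \<nu> / 8) \<le> p * (k * \<nu> / 8)"
    using large k nu unfolding k_def by (intro mult_right_mono) auto
  then have mu_a3: "\<mu> * a3 * M \<le> k * \<nu> / 8 * p"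
    using k nu by (simp add: field_simps)
  have "\<mu> * a1 * S \<le> \<mu> * a1 * (p + \<gamma> + J)"
    using S_le mu a1 by (intro mult_left_mono) auto
  then have "k * J \<le> \<mu> * a1 * \<gamma> + \<mu> * (a1 + a2) * p + \<mu> * a3 * M"
    using J_le unfolding k_def by (simp add: algebra_simps)
  also have "\<dots> \<le> k * \<nu> / 4 * p + \<mu> * a1 * \<gamma>"
    using mu_a12 mu_a3 by simp
  also have "\<dots> = k * (\<nu> / 4 * p + \<gamma> / k - \<gamma>)"
    using k unfolding k_def by (simp add: field_simps)
  finally have "J \<le> \<nu> / 4 * p + \<gamma> / k - \<gamma>" using k by simp
  then show ?thesis unfolding k_def by simp
qed

text \<open>The one-step decay estimate.\<close>
theorem mainTheorem13:
  fixes \<phi> \<phi>' :: "real \<Rightarrow> real" and D :: "real set"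
    and \<tau> \<nu> \<gamma> M \<mu> a1 a2 a3 :: real
  assumes D_fin: "finite D" and D_sub: "D \<subseteq> {\<tau><..\<tau>+1}"
    and right_cont: "\<forall>t\<in>{\<tau>..<\<tau>+1}. continuous (at_right t) \<phi>"
    and cont_off_D: "\<forall>t\<in>{\<tau>..\<tau>+1} - D. continuous (at t within {\<tau>..\<tau>+1}) \<phi>"
    and left_lims: "\<forall>t\<in>D. \<exists>L. (\<phi> \<longlongrightarrow> L) (at_left t)"
    and C1: "\<forall>t\<in>{\<tau><..<\<tau>+1} - D. (\<phi> has_real_derivative \<phi>' t) (at t)"
    and C1_cont: "continuous_on ({\<tau><..<\<tau>+1} - D) \<phi>'"
    and phi_nonneg: "\<phi> \<tau> \<ge> 0"
    and nu: "0 < \<nu>" "\<nu> \<le> 1" and gamma: "\<gamma> \<ge> 0" and M: "M \<ge> 0"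
    and mu: "\<mu> \<ge> 0" and a1: "a1 \<ge> 0" and a2: "a2 \<ge> 0" and a3: "a3 \<ge> 0"
    and mua1: "\<mu> * a1 < 1"
    and diff_ineq: "\<forall>t\<in>{\<tau><..<\<tau>+1}. \<forall>d. (\<phi> has_real_derivative d) (at t) \<longrightarrow> d \<le> - \<nu> * \<phi> t + \<gamma>"
    and jumps: "(\<Sum>t\<in>D. max 0 (\<phi> t - left_lim \<phi> t))
                 \<le> \<mu> * (a1 * (SUP t\<in>{\<tau>..\<tau>+1}. \<phi> t) + a2 * \<phi> \<tau> + a3 * M)"
    and small: "\<mu> * (a1 * (1 + \<mu> * a2) / (1 - \<mu> * a1) + a2) \<le> \<nu> / 8"
    and large: "\<phi> \<tau> \<ge> (8 * \<mu> / \<nu>) * a3 * M * (1 / (1 - \<mu> * a1))"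
  shows "\<phi> (\<tau> + 1) \<le> (1 - \<nu> / 4) * \<phi> \<tau> + \<gamma> / (1 - \<mu> * a1)"
proof -
  define J where "J = (\<Sum>t\<in>D. max 0 (\<phi> t - left_lim \<phi> t))"
  have ode: "\<forall>t\<in>{\<tau><..<\<tau>+1} - D. \<exists>y. (\<phi> has_real_derivative y) (at t) \<and> y \<le> - \<nu> * \<phi> t + \<gamma>"
    using C1 diff_ineq by blast
  have right_cont_D: "\<forall>t\<in>D. t < \<tau> + 1 \<longrightarrow> continuous (at_right t) \<phi>"
    using right_cont D_sub by auto
  have bound: "\<phi> t \<le> exp (- (\<nu> * (t - \<tau>))) * \<phi> \<tau> + \<gamma> + J" if t: "t \<in> {\<tau>..\<tau>+1}" for t
  proof -
    have "(\<Sum>s\<in>D \<inter> {\<tau><..t}. max 0 (\<phi> s - left_lim \<phi> s)) \<le> J"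
      unfolding J_def by (rule sum_mono2) (use D_fin in auto)
    moreover have "\<gamma> / \<nu> * (1 - exp (- (\<nu> * (t - \<tau>)))) \<le> \<gamma> * (t - \<tau>)"
      using forcing_gain_le nu(1) gamma t by simp
    moreover have "\<gamma> * (t - \<tau>) \<le> \<gamma>" using gamma t by (simp add: mult_left_le)
    ultimately show ?thesis
      using groenwall_with_jumps[OF D_fin D_sub right_cont_D cont_off_D left_lims ode nu(1) t]
      by linarith
  qed
  have sup: "(SUP t\<in>{\<tau>..\<tau>+1}. \<phi> t) \<le> \<phi> \<tau> + \<gamma> + J"
  proof (rule cSUP_least)
    fix t assume t: "t \<in> {\<tau>..\<tau>+1}"
    have "exp (- (\<nu> * (t - \<tau>))) * \<phi> \<tau> \<le> \<phi> \<tau>"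
      using t nu phi_nonneg by (simp add: mult_left_le_one_le)
    then show "\<phi> t \<le> \<phi> \<tau> + \<gamma> + J" using bound[OF t] by linarith
  qed simp
  have "\<gamma> + J \<le> \<nu> / 4 * \<phi> \<tau> + \<gamma> / (1 - \<mu> * a1)"
    using absorb_jump_mass[OF phi_nonneg nu(1) mu a1 mua1 _ sup small large] jumps
    unfolding J_def by blast
  moreover have "exp (- \<nu>) * \<phi> \<tau> \<le> (1 - \<nu> / 2) * \<phi> \<tau>"
    using exp_neg_le_one_minus_half nu phi_nonneg by (intro mult_right_mono) auto
  ultimately show ?thesis using bound[of "\<tau> + 1"] by (simp add: algebra_simps)
qed

end
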